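(* Let $\beta\in\mathcal{A}$. If $\nu^\star\in N_\beta$ is an $X$-circuit of $\mathcal{A}$, then the set $(\nu^\star)^+=\{\alpha\in\mathcal{A}:\nu^\star_\alpha>0\}=\operatorname{supp}\nu^\star\setminus\{\beta\}$ is affinely independent (as a subset of $\mathbb{R}^n$).
   Context: $X\subset\mathbb{R}^n$ is a nonempty closed convex set and $\mathcal{A}\subset\mathbb{R}^n$ is a nonempty finite set. $\mathbb{R}^{\mathcal{A}}$ denotes real vectors indexed by $\mathcal{A}$. $\mathcal{A}$ is viewed as the linear map $\mathbb{R}^{\mathcal{A}}\to\mathbb{R}^n$, $\mathcal{A}\nu=\sum_{\alpha\in\mathcal{A}}\alpha\nu_\alpha$. The support function of $X$ is $\sigma_X(y)=\sup\{y^Tx:x\in X\}\in\mathbb{R}\cup\{+\infty\}$. For $\beta\in\mathcal{A}$, $N_\beta=\{\nu\in\mathbb{R}^{\mathcal{A}}:\nu_\alpha\ge0\ \forall\alpha\neq\beta,\ \sum_{\alpha}\nu_\alpha=0\}$. A vector $\nu^\star\in N_\beta$ is an $X$-circuit of $\mathcal{A}$ if (1) $\nu^\star\neq0$, (2) $\sigma_X(-\mathcal{A}\nu^\star)<\infty$, and (3) $\nu^\star$ cannot be written as a convex combination of two non-proportional vectors $\nu^{(1)},\nu^{(2)}\in N_\beta$ such that the map $\nu\mapsto\sigma_X(-\mathcal{A}\nu)$ is affine on the segment $[\nu^{(1)},\nu^{(2)}]$. *)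

theory Defs
  imports "HOL-Analysis.Analysis"
begin

(* Vectors in R^A are represented as functions 'a => real vanishing outside A. *)

definition coeff_vecs :: "'a set \<Rightarrow> ('a \<Rightarrow> real) set" where
  "coeff_vecs A = {\<nu>. \<forall>\<alpha>. \<alpha> \<notin> A \<longrightarrow> \<nu> \<alpha> = 0}"

definition lin_map :: "'a::euclidean_space set \<Rightarrow> ('a \<Rightarrow> real) \<Rightarrow> 'a" where
  "lin_map A \<nu> = (\<Sum>\<alpha>\<in>A. \<nu> \<alpha> *\<^sub>R \<alpha>)"

definition support_fun :: "'a::euclidean_space set \<Rightarrow> 'a \<Rightarrow> ereal" where
  "support_fun X y = (SUP x\<in>X. ereal (y \<bullet> x))"

definition N_set :: "'a set \<Rightarrow> 'a \<Rightarrow> ('a \<Rightarrow> real) set" where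
  "N_set A \<beta> = {\<nu> \<in> coeff_vecs A. (\<forall>\<alpha>\<in>A. \<alpha> \<noteq> \<beta> \<longrightarrow> \<nu> \<alpha> \<ge> 0) \<and> (\<Sum>\<alpha>\<in>A. \<nu> \<alpha>) = 0}"

definition proportional :: "('a \<Rightarrow> real) \<Rightarrow> ('a \<Rightarrow> real) \<Rightarrow> bool" where
  "proportional \<nu>1 \<nu>2 \<longleftrightarrow> (\<exists>c. \<nu>1 = (\<lambda>\<alpha>. c * \<nu>2 \<alpha>)) \<or> (\<exists>c. \<nu>2 = (\<lambda>\<alpha>. c * \<nu>1 \<alpha>))"

definition affine_on_segment ::
  "'a::euclidean_space set \<Rightarrow> 'a set \<Rightarrow> ('a \<Rightarrow> real) \<Rightarrow> ('a \<Rightarrow> real) \<Rightarrow> bool" where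
  "affine_on_segment X A \<nu>1 \<nu>2 \<longleftrightarrow>
     (\<exists>a b::real. \<forall>t\<in>{0..1}.
        support_fun X (- lin_map A (\<lambda>\<alpha>. (1 - t) * \<nu>1 \<alpha> + t * \<nu>2 \<alpha>)) = ereal (a + b * t))"

definition X_circuit :: "'a::euclidean_space set \<Rightarrow> 'a set \<Rightarrow> 'a \<Rightarrow> ('a \<Rightarrow> real) \<Rightarrow> bool" where
  "X_circuit X A \<beta> \<nu> \<longleftrightarrow>
     \<nu> \<in> N_set A \<beta> \<and> \<nu> \<noteq> (\<lambda>_. 0) \<and>
     support_fun X (- lin_map A \<nu>) < \<infinity> \<and>
     \<not> (\<exists>\<nu>1 \<nu>2 \<theta>. \<nu>1 \<in> N_set A \<beta> \<and> \<nu>2 \<in> N_set A \<beta> \<and> \<not> proportional \<nu>1 \<nu>2 \<and>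
          0 < \<theta> \<and> \<theta> < 1 \<and> \<nu> = (\<lambda>\<alpha>. \<theta> * \<nu>1 \<alpha> + (1 - \<theta>) * \<nu>2 \<alpha>) \<and>
          affine_on_segment X A \<nu>1 \<nu>2)"

end

theory Submission
  imports Defs
begin

text \<open>If the positive support P of the circuit \<nu> were affinely dependent, an affine
dependency \<mu> on P, scaled small enough, gives \<nu> = (\<nu> + \<mu>)/2 + (\<nu> - \<mu>)/2 with both
summands in N_\<beta>. Since \<mu> lies in the kernel of A, the map
\<nu>' \<mapsto> \<sigma>_X(-A\<nu>') is constant on the segment between them, and the two summands are not
proportional because they agree at \<beta>, where \<nu> is negative and \<mu> vanishes.\<close>

lemma N_set_neg_at_base:
  assumes "finite A" and "\<nu> \<in> N_set A \<beta>" and "\<nu> \<noteq> (\<lambda>_. 0)"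
  shows "\<nu> \<beta> < 0"
proof (rule ccontr)
  assume "\<not> \<nu> \<beta> < 0"
  with assms(2) have "\<forall>\<alpha>\<in>A. \<nu> \<alpha> \<ge> 0" and "(\<Sum>\<alpha>\<in>A. \<nu> \<alpha>) = 0"
    unfolding N_set_def by force+
  with assms(1) have "\<forall>\<alpha>\<in>A. \<nu> \<alpha> = 0" using sum_nonneg_eq_0_iff by blast
  with assms(2) have "\<nu> = (\<lambda>_. 0)" unfolding N_set_def coeff_vecs_def by auto
  with assms(3) show False ..
qed

lemma lin_map_lincomb:
  "lin_map A (\<lambda>\<alpha>. a * \<nu> \<alpha> + b * \<mu> \<alpha>) = a *\<^sub>R lin_map A \<nu> + b *\<^sub>R lin_map A \<mu>"
  unfolding lin_map_def by (simp add: scaleR_add_left sum.distrib scaleR_sum_right)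

lemma affine_dependent_imp_small_kernel_vector:
  fixes P :: "'a::euclidean_space set"
  assumes "finite A" and "P \<subseteq> A" and "affine_dependent P"
    and pos: "\<And>\<alpha>. \<alpha> \<in> P \<Longrightarrow> w \<alpha> > 0"
  obtains \<mu> where "\<And>\<alpha>. \<alpha> \<notin> P \<Longrightarrow> \<mu> \<alpha> = 0" and "\<mu> \<noteq> (\<lambda>_. 0)"
    and "(\<Sum>\<alpha>\<in>A. \<mu> \<alpha>) = 0" and "lin_map A \<mu> = 0"
    and "\<And>\<alpha>. \<alpha> \<in> P \<Longrightarrow> \<bar>\<mu> \<alpha>\<bar> \<le> w \<alpha>"
proof -
  have finP: "finite P" using assms(1,2) by (rule finite_subset[rotated])
  from assms(3) obtain u where u_sum: "sum u P = 0" and u_nz: "\<exists>v\<in>P. u v \<noteq> 0"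
    and u_comb: "(\<Sum>v\<in>P. u v *\<^sub>R v) = 0"
    using affine_dependent_explicit_finite[OF finP] by auto
  text \<open>The summand 1 keeps the denominators positive where u vanishes.\<close>
  define \<epsilon> where "\<epsilon> = Min ((\<lambda>\<alpha>. w \<alpha> / (\<bar>u \<alpha>\<bar> + 1)) ` P)"
  have \<epsilon>_pos: "\<epsilon> > 0"
    unfolding \<epsilon>_def using finP u_nz pos by (subst Min_gr_iff) auto
  have \<epsilon>_le: "\<epsilon> * \<bar>u \<alpha>\<bar> \<le> w \<alpha>" if "\<alpha> \<in> P" for \<alpha>
  proof -
    have "\<epsilon> \<le> w \<alpha> / (\<bar>u \<alpha>\<bar> + 1)" unfolding \<epsilon>_def using finP that by (intro Min_le) auto
    then have "\<epsilon> * (\<bar>u \<alpha>\<bar> + 1) \<le> w \<alpha>" by (simp add: pos_le_divide_eq add_pos_nonneg)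
    with \<epsilon>_pos show ?thesis by (simp add: algebra_simps)
  qed
  define \<mu> where "\<mu> = (\<lambda>\<alpha>. if \<alpha> \<in> P then \<epsilon> * u \<alpha> else 0)"
  have restrict: "(\<Sum>\<alpha>\<in>A. f \<alpha>) = (\<Sum>\<alpha>\<in>P. f \<alpha>)"
    if "\<And>\<alpha>. \<alpha> \<notin> P \<Longrightarrow> f \<alpha> = 0" for f :: "'a \<Rightarrow> 'b::comm_monoid_add"
    using assms(1,2) that by (intro sum.mono_neutral_right) auto
  show thesis
  proof
    show "\<mu> \<alpha> = 0" if "\<alpha> \<notin> P" for \<alpha> using that by (simp add: \<mu>_def)
    show "\<mu> \<noteq> (\<lambda>_. 0)" using u_nz \<epsilon>_pos unfolding \<mu>_def by (metis mult_eq_0_iff less_irrefl)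
    have "(\<Sum>\<alpha>\<in>A. \<mu> \<alpha>) = \<epsilon> * sum u P"
      by (subst restrict) (simp_all add: \<mu>_def sum_distrib_left)
    with u_sum show "(\<Sum>\<alpha>\<in>A. \<mu> \<alpha>) = 0" by simp
    have "lin_map A \<mu> = \<epsilon> *\<^sub>R (\<Sum>v\<in>P. u v *\<^sub>R v)"
      unfolding lin_map_def by (subst restrict) (simp_all add: \<mu>_def scaleR_sum_right)
    with u_comb show "lin_map A \<mu> = 0" by simp
    show "\<bar>\<mu> \<alpha>\<bar> \<le> w \<alpha>" if "\<alpha> \<in> P" for \<alpha>
      using \<epsilon>_le[OF that] \<epsilon>_pos that by (simp add: \<mu>_def abs_mult)
  qed
qed

lemma N_set_add_perturbation_on_pos_support:
  assumes "\<nu> \<in> N_set A \<beta>" and supp: "\<And>\<alpha>. \<alpha> \<notin> {\<alpha> \<in> A. \<nu> \<alpha> > 0} \<Longrightarrow> \<mu> \<alpha> = 0"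
    and "(\<Sum>\<alpha>\<in>A. \<mu> \<alpha>) = 0"
    and bound: "\<And>\<alpha>. \<alpha> \<in> A \<Longrightarrow> \<nu> \<alpha> > 0 \<Longrightarrow> \<bar>\<mu> \<alpha>\<bar> \<le> \<nu> \<alpha>" and "\<bar>c\<bar> \<le> 1"
  shows "(\<lambda>\<alpha>. \<nu> \<alpha> + c * \<mu> \<alpha>) \<in> N_set A \<beta>"
proof -
  have "\<nu> \<alpha> + c * \<mu> \<alpha> \<ge> 0" if "\<alpha> \<in> A" "\<alpha> \<noteq> \<beta>" for \<alpha>
  proof (cases "\<nu> \<alpha> > 0")
    case True
    have "\<bar>c * \<mu> \<alpha>\<bar> \<le> \<bar>\<mu> \<alpha>\<bar>"
      using \<open>\<bar>c\<bar> \<le> 1\<close> by (simp add: abs_mult mult_left_le_one_le)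
    with bound[OF \<open>\<alpha> \<in> A\<close> True] show ?thesis by linarith
  next
    case False
    with supp assms(1) that show ?thesis by (simp add: N_set_def)
  qed
  moreover have "\<mu> \<alpha> = 0" if "\<alpha> \<notin> A" for \<alpha> using supp that by simp
  ultimately show ?thesis using assms(1,3)
    unfolding N_set_def coeff_vecs_def by (simp add: sum.distrib sum_distrib_left[symmetric])
qed

lemma support_fun_finite:
  assumes "X \<noteq> {}" and "support_fun X y < \<infinity>"
  obtains s where "support_fun X y = ereal s"
proof -
  obtain x where "x \<in> X" using assms(1) by auto
  then have "ereal (y \<bullet> x) \<le> support_fun X y"
    unfolding support_fun_def by (rule SUP_upper)
  with assms(2) that show thesis by (cases "support_fun X y") auto
qed

lemma affine_on_segment_if_lin_map_eq:
  assumes "X \<noteq> {}" and "lin_map A \<nu>1 = lin_map A \<nu>2"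
    and "support_fun X (- lin_map A \<nu>1) < \<infinity>"
  shows "affine_on_segment X A \<nu>1 \<nu>2"
proof -
  obtain s where s: "support_fun X (- lin_map A \<nu>1) = ereal s"
    using support_fun_finite[OF assms(1,3)] .
  have "lin_map A (\<lambda>\<alpha>. (1 - t) * \<nu>1 \<alpha> + t * \<nu>2 \<alpha>) = lin_map A \<nu>1" for t
    unfolding lin_map_lincomb assms(2) by (simp add: algebra_simps)
  with s show ?thesis unfolding affine_on_segment_def by (intro exI[of _ s] exI[of _ 0]) simp
qed

lemma not_proportional_add_diff:
  assumes "\<nu> \<beta> \<noteq> 0" and "\<mu> \<beta> = 0" and "\<mu> \<noteq> (\<lambda>_. 0)"
  shows "\<not> proportional (\<lambda>\<alpha>. \<nu> \<alpha> + \<mu> \<alpha>) (\<lambda>\<alpha>. \<nu> \<alpha> - \<mu> \<alpha>)"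
proof
  have multiple_imp_zero: "\<mu> = (\<lambda>_. 0)" if "(\<lambda>\<alpha>. \<nu> \<alpha> + s * \<mu> \<alpha>) = (\<lambda>\<alpha>. c * (\<nu> \<alpha> - s * \<mu> \<alpha>))"
    and "s = 1 \<or> s = -1" for s c
  proof -
    from fun_cong[OF that(1), of \<beta>] assms(1,2) have "c = 1" by simp
    with that have "\<mu> \<alpha> = 0" for \<alpha> using fun_cong[OF that(1), of \<alpha>] by auto
    then show ?thesis by auto
  qed
  assume "proportional (\<lambda>\<alpha>. \<nu> \<alpha> + \<mu> \<alpha>) (\<lambda>\<alpha>. \<nu> \<alpha> - \<mu> \<alpha>)"
  then obtain c where "(\<lambda>\<alpha>. \<nu> \<alpha> + 1 * \<mu> \<alpha>) = (\<lambda>\<alpha>. c * (\<nu> \<alpha> - 1 * \<mu> \<alpha>))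
      \<or> (\<lambda>\<alpha>. \<nu> \<alpha> + (-1) * \<mu> \<alpha>) = (\<lambda>\<alpha>. c * (\<nu> \<alpha> - (-1) * \<mu> \<alpha>))"
    unfolding proportional_def by auto
  with multiple_imp_zero assms(3) show False by blast
qed

theorem proposition3p4:
  fixes X :: "'a::euclidean_space set" and A :: "'a set"
    and \<beta> :: 'a and \<nu> :: "'a \<Rightarrow> real"
  assumes "X \<noteq> {}" and "closed X" and "convex X"
    and "finite A" and "A \<noteq> {}"
    and "\<beta> \<in> A"
    and "X_circuit X A \<beta> \<nu>"
  shows "\<not> affine_dependent {\<alpha> \<in> A. \<nu> \<alpha> > 0}"
proof
  assume dep: "affine_dependent {\<alpha> \<in> A. \<nu> \<alpha> > 0}"
  obtain \<mu> where \<mu>_supp: "\<And>\<alpha>. \<alpha> \<notin> {\<alpha> \<in> A. \<nu> \<alpha> > 0} \<Longrightarrow> \<mu> \<alpha> = 0"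
    and \<mu>_nz: "\<mu> \<noteq> (\<lambda>_. 0)" and \<mu>_sum: "(\<Sum>\<alpha>\<in>A. \<mu> \<alpha>) = 0" and \<mu>_ker: "lin_map A \<mu> = 0"
    and \<mu>_le: "\<And>\<alpha>. \<alpha> \<in> {\<alpha> \<in> A. \<nu> \<alpha> > 0} \<Longrightarrow> \<bar>\<mu> \<alpha>\<bar> \<le> \<nu> \<alpha>"
    by (rule affine_dependent_imp_small_kernel_vector[OF assms(4) _ dep]) auto
  have \<nu>_N: "\<nu> \<in> N_set A \<beta>" and \<nu>_nz: "\<nu> \<noteq> (\<lambda>_. 0)"
    and \<sigma>_fin: "support_fun X (- lin_map A \<nu>) < \<infinity>"
    using assms(7) unfolding X_circuit_def by blast+
  have "\<nu> \<beta> < 0" using N_set_neg_at_base[OF assms(4) \<nu>_N \<nu>_nz] .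
  then have "\<mu> \<beta> = 0" using \<mu>_supp by simp
  have "(\<lambda>\<alpha>. \<nu> \<alpha> + c * \<mu> \<alpha>) \<in> N_set A \<beta>" if "\<bar>c\<bar> \<le> 1" for c
    by (rule N_set_add_perturbation_on_pos_support[OF \<nu>_N _ \<mu>_sum _ that])
      (simp_all add: \<mu>_supp \<mu>_le)
  from this[of 1] this[of "-1"]
  have "(\<lambda>\<alpha>. \<nu> \<alpha> + \<mu> \<alpha>) \<in> N_set A \<beta>" and "(\<lambda>\<alpha>. \<nu> \<alpha> - \<mu> \<alpha>) \<in> N_set A \<beta>" by simp_all
  moreover have "\<not> proportional (\<lambda>\<alpha>. \<nu> \<alpha> + \<mu> \<alpha>) (\<lambda>\<alpha>. \<nu> \<alpha> - \<mu> \<alpha>)"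
    using \<open>\<nu> \<beta> < 0\<close> \<open>\<mu> \<beta> = 0\<close> \<mu>_nz by (intro not_proportional_add_diff) simp_all
  moreover have "affine_on_segment X A (\<lambda>\<alpha>. \<nu> \<alpha> + \<mu> \<alpha>) (\<lambda>\<alpha>. \<nu> \<alpha> - \<mu> \<alpha>)"
    using lin_map_lincomb[of A 1 \<nu> 1 \<mu>] lin_map_lincomb[of A 1 \<nu> "-1" \<mu>] \<mu>_ker \<sigma>_fin
    by (intro affine_on_segment_if_lin_map_eq[OF assms(1)]) simp_all
  moreover have "\<nu> = (\<lambda>\<alpha>. (1/2) * (\<nu> \<alpha> + \<mu> \<alpha>) + (1 - 1/2) * (\<nu> \<alpha> - \<mu> \<alpha>))"
    by (simp add: field_simps)
  ultimately have "\<exists>\<nu>1 \<nu>2 \<theta>. \<nu>1 \<in> N_set A \<beta> \<and> \<nu>2 \<in> N_set A \<beta> \<and> \<not> proportional \<nu>1 \<nu>2 \<and>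
      0 < \<theta> \<and> \<theta> < 1 \<and> \<nu> = (\<lambda>\<alpha>. \<theta> * \<nu>1 \<alpha> + (1 - \<theta>) * \<nu>2 \<alpha>) \<and>
      affine_on_segment X A \<nu>1 \<nu>2"
    by (intro exI[of _ "\<lambda>\<alpha>. \<nu> \<alpha> + \<mu> \<alpha>"] exI[of _ "\<lambda>\<alpha>. \<nu> \<alpha> - \<mu> \<alpha>"] exI[of _ "1/2"]) simp
  with assms(7) show False unfolding X_circuit_def by (elim conjE notE)
qed

end
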